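(* Let $\mathcal G$ be locally $\mathrm d$-finite and let $\mathcal L:\mathbb R^V\supset\mathrm{Dom}(\mathcal L)\to\mathbb R^V$ be a linear operator with $\mathcal C_{\mathrm{fs}}(\mathcal G)\subset\mathrm{Dom}(\mathcal L)$ that is bounded with respect to the sup-norm, semi-local, and a rough differential operator. Then ${}^{\mathcal O}\mathrm{Ric}_{\mathcal L}(x,y)$ is finite for all distinct $x,y\in V$.
   Context: $\mathcal G$ is a locally finite graph with vertex set $V$ and a distance $\mathrm d$ on $V$ with $(V,\mathrm d)$ complete; locally $\mathrm d$-finite means every $\mathrm d$-metric ball is a finite set. $\mathcal C_{\mathrm{fs}}(\mathcal G)$ = finitely supported functions; $\mathrm{Lip}(1)$ = functions with $|f(u)-f(v)|\le\mathrm d(u,v)$; $\nabla_{xy}f=(f(y)-f(x))/\mathrm d(x,y)$; ${}^{\mathcal O}\mathrm{Ric}_{\mathcal L}(x,y):=\inf\{\nabla_{yx}\mathcal Lf:\ f\in\mathcal C_{\mathrm{fs}}\cap\mathrm{Lip}(1),\ \nabla_{xy}f=1\}$. Bounded: there is $B>0$ with $\sup|\mathcal Lf|\le B\sup|f|$ for all $f\in\mathcal C_{\mathrm{fs}}$. Semi-local: there exist $R>0$ and $C_2>0$ such that for all $x$ and all $f\in\mathrm{Dom}(\mathcal L)\cap\mathrm{Lip}(1)$, $f|_{\mathcal B_R(x)}=0$ implies $\mathcal Lf(x)=0$, and $|\mathcal B_{2R}(x)|\le C_2$ for all $x$ ($\mathcal B_r(x)$ the $\mathrm d$-ball). Rough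 differential operator: $\mathcal L1=0$. *)

theory Defs
  imports "HOL-Analysis.Analysis"
begin

text \<open>The vertex set V is the universe of the type 'v. d is a distance on V.\<close>

definition is_distance :: "('v \<Rightarrow> 'v \<Rightarrow> real) \<Rightarrow> bool" where
  "is_distance d \<longleftrightarrow>
     (\<forall>x y. 0 \<le> d x y) \<and> (\<forall>x y. d x y = 0 \<longleftrightarrow> x = y) \<and>
     (\<forall>x y. d x y = d y x) \<and> (\<forall>x y z. d x z \<le> d x y + d y z)"

definition d_complete :: "('v \<Rightarrow> 'v \<Rightarrow> real) \<Rightarrow> bool" where
  "d_complete d \<longleftrightarrow>
     (\<forall>s :: nat \<Rightarrow> 'v. (\<forall>e>0. \<exists>N. \<forall>m\<ge>N. \<forall>n\<ge>N. d (s m) (s n) < e)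
        \<longrightarrow> (\<exists>l. \<forall>e>0. \<exists>N. \<forall>n\<ge>N. d (s n) l < e))"

definition dball :: "('v \<Rightarrow> 'v \<Rightarrow> real) \<Rightarrow> 'v \<Rightarrow> real \<Rightarrow> 'v set" where
  "dball d x r = {y. d x y \<le> r}"

definition locally_d_finite :: "('v \<Rightarrow> 'v \<Rightarrow> real) \<Rightarrow> bool" where
  "locally_d_finite d \<longleftrightarrow> (\<forall>x r. finite (dball d x r))"

definition locally_finite_graph :: "('v \<Rightarrow> 'v \<Rightarrow> bool) \<Rightarrow> bool" where
  "locally_finite_graph E \<longleftrightarrow> (\<forall>x y. E x y \<longleftrightarrow> E y x) \<and> (\<forall>x. finite {y. E x y})"

definition Cfs :: "('v \<Rightarrow> real) set" where
  "Cfs = {f. finite {x. f x \<noteq> 0}}"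

definition Lip1 :: "('v \<Rightarrow> 'v \<Rightarrow> real) \<Rightarrow> ('v \<Rightarrow> real) set" where
  "Lip1 d = {f. \<forall>u v. \<bar>f u - f v\<bar> \<le> d u v}"

definition grad :: "('v \<Rightarrow> 'v \<Rightarrow> real) \<Rightarrow> 'v \<Rightarrow> 'v \<Rightarrow> ('v \<Rightarrow> real) \<Rightarrow> real" where
  "grad d x y f = (f y - f x) / d x y"

text \<open>Ollivier-type curvature, valued in the extended reals (Inf of the empty set is \<infinity>).\<close>
definition ORic :: "('v \<Rightarrow> 'v \<Rightarrow> real) \<Rightarrow> (('v \<Rightarrow> real) \<Rightarrow> ('v \<Rightarrow> real)) \<Rightarrow> 'v \<Rightarrow> 'v \<Rightarrow> ereal" where
  "ORic d L x y = Inf {ereal (grad d y x (L f)) | f. f \<in> Cfs \<inter> Lip1 d \<and> grad d x y f = 1}"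

definition linear_op_on :: "('v \<Rightarrow> real) set \<Rightarrow> (('v \<Rightarrow> real) \<Rightarrow> ('v \<Rightarrow> real)) \<Rightarrow> bool" where
  "linear_op_on D L \<longleftrightarrow>
     (\<forall>f\<in>D. \<forall>g\<in>D. \<forall>a b::real. (\<lambda>x. a * f x + b * g x) \<in> D \<and>
        L (\<lambda>x. a * f x + b * g x) = (\<lambda>x. a * L f x + b * L g x))"

definition sup_bounded :: "(('v \<Rightarrow> real) \<Rightarrow> ('v \<Rightarrow> real)) \<Rightarrow> bool" where
  "sup_bounded L \<longleftrightarrow> (\<exists>B>0. \<forall>f\<in>Cfs. (\<forall>x. \<bar>L f x\<bar> \<le> B * (SUP y. \<bar>f y\<bar>)))"

definition semi_local :: "('v \<Rightarrow> 'v \<Rightarrow> real) \<Rightarrow> ('v \<Rightarrow> real) set \<Rightarrow> (('v \<Rightarrow> real) \<Rightarrow> ('v \<Rightarrow> real)) \<Rightarrow> bool" where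
  "semi_local d D L \<longleftrightarrow> (\<exists>R>0. \<exists>C2>0.
     (\<forall>x. \<forall>f\<in>D \<inter> Lip1 d. (\<forall>y\<in>dball d x R. f y = 0) \<longrightarrow> L f x = 0) \<and>
     (\<forall>x. real (card (dball d x (2 * R))) \<le> C2))"

definition rough_diff_op :: "('v \<Rightarrow> real) set \<Rightarrow> (('v \<Rightarrow> real) \<Rightarrow> ('v \<Rightarrow> real)) \<Rightarrow> bool" where
  "rough_diff_op D L \<longleftrightarrow> (\<lambda>_. 1) \<in> D \<and> L (\<lambda>_. 1) = (\<lambda>_. 0)"

end

theory Submission
  imports Defs
begin

text \<open>
  Let \<open>B\<close> be the sup-norm bound of \<open>L\<close> and \<open>R\<close> its locality radius. For a finitely supported
  1-Lipschitz \<open>f\<close> and a vertex \<open>z\<close>, truncating \<open>f\<close> to \<open>[f z - R, f z + R]\<close> does not change it on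
  the ball of radius \<open>R\<close> around \<open>z\<close>, so by semi-locality \<open>L\<close> takes the same value at \<open>z\<close> on
  \<open>f\<close> and on its truncation. Since \<open>L 1 = 0\<close>, we may shift the truncation by a constant so that
  it becomes finitely supported with sup-norm at most \<open>2 R\<close>; hence \<open>\<bar>L f z\<bar> \<le> 2 B R\<close>, and the
  gradients entering the curvature are bounded below by \<open>-4 B R / d(x,y)\<close>. The infimum is not
  \<open>\<infinity>\<close> because the bump \<open>max 0 (d(x,y) - d(y,\<cdot>))\<close> is admissible.
\<close>

lemma linear_op_onD:
  assumes "linear_op_on D L" "f \<in> D" "g \<in> D"
  shows "(\<lambda>v. a * f v + b * g v) \<in> D" "L (\<lambda>v. a * f v + b * g v) = (\<lambda>v. a * L f v + b * L g v)"
  using assms unfolding linear_op_on_def by blast+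

lemma rough_diff_op_shift:
  assumes "linear_op_on D L" "rough_diff_op D L" "f \<in> D"
  shows "(\<lambda>v. f v - c) \<in> D" "L (\<lambda>v. f v - c) = L f"
proof -
  have one: "(\<lambda>_. 1) \<in> D" "L (\<lambda>_. 1) = (\<lambda>_. 0)"
    using assms(2) by (auto simp: rough_diff_op_def)
  have shift: "(\<lambda>v. f v - c) = (\<lambda>v. 1 * f v + (- c) * 1)"
    by simp
  show "(\<lambda>v. f v - c) \<in> D"
    unfolding shift using linear_op_onD(1)[OF assms(1,3) one(1)] .
  show "L (\<lambda>v. f v - c) = L f"
    unfolding shift linear_op_onD(2)[OF assms(1,3) one(1)] one(2) by simp
qed

lemma semi_local_agree:
  assumes lin: "linear_op_on D L"
    and local: "\<forall>f\<in>D \<inter> Lip1 d. (\<forall>w\<in>dball d z R. f w = 0) \<longrightarrow> L f z = 0"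
    and "f \<in> D" "g \<in> D" "f \<in> Lip1 d" "g \<in> Lip1 d"
    and agree: "\<forall>w\<in>dball d z R. f w = g w"
  shows "L f z = L g z"
proof -
  define h where "h = (\<lambda>v. (1/2) * f v + (-1/2) * g v)"
    \<comment> \<open>\<open>f - g\<close> itself is only 2-Lipschitz\<close>
  have "h \<in> D" and Lh: "L h = (\<lambda>v. (1/2) * L f v + (-1/2) * L g v)"
    unfolding h_def using linear_op_onD[OF lin \<open>f \<in> D\<close> \<open>g \<in> D\<close>] by blast+
  moreover have "h \<in> Lip1 d"
  proof -
    have "\<bar>h u - h v\<bar> \<le> d u v" for u v
    proof -
      have "\<bar>f u - f v\<bar> \<le> d u v" "\<bar>g u - g v\<bar> \<le> d u v"
        using \<open>f \<in> Lip1 d\<close> \<open>g \<in> Lip1 d\<close> by (auto simp: Lip1_def)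
      moreover have "h u - h v = ((f u - f v) - (g u - g v)) / 2"
        unfolding h_def by (simp add: field_simps)
      ultimately show ?thesis
        by (simp add: abs_le_iff)
    qed
    then show ?thesis
      by (simp add: Lip1_def)
  qed
  moreover have "\<forall>w\<in>dball d z R. h w = 0"
    using agree unfolding h_def by simp
  ultimately have "L h z = 0"
    using local by blast
  then show ?thesis
    using Lh by simp
qed

lemma clamp_Lip1:
  assumes "f \<in> Lip1 d"
  shows "(\<lambda>v. max a (min b (f v))) \<in> Lip1 d"
proof -
  have "\<bar>max a (min b s) - max a (min b t)\<bar> \<le> \<bar>s - t\<bar>" for s t :: real
    by (simp add: abs_if max_def min_def)
  then show ?thesis
    using assms unfolding Lip1_def by (blast intro: order_trans)
qed

lemma Lip1_Cfs_uniform_bound: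
  assumes lin: "linear_op_on D L" and "Cfs \<subseteq> D"
    and bounded: "\<forall>f\<in>Cfs. \<forall>x. \<bar>L f x\<bar> \<le> B * (SUP y. \<bar>f y\<bar>)" and "B \<ge> 0"
    and local: "\<forall>x. \<forall>f\<in>D \<inter> Lip1 d. (\<forall>y\<in>dball d x R. f y = 0) \<longrightarrow> L f x = 0" and "R \<ge> 0"
    and rough: "rough_diff_op D L"
    and f: "f \<in> Cfs" "f \<in> Lip1 d"
  shows "\<bar>L f z\<bar> \<le> 2 * B * R"
proof -
  define k where "k = (\<lambda>v. max (f z - R) (min (f z + R) (f v)))"
  define c where "c = max (f z - R) (min (f z + R) 0)"
  define k0 where "k0 = (\<lambda>v. k v - c)"
  have "k0 \<in> Cfs"
  proof -
    have "{v. k0 v \<noteq> 0} \<subseteq> {v. f v \<noteq> 0}"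
      unfolding k0_def k_def c_def by auto
    then show ?thesis
      using \<open>f \<in> Cfs\<close> finite_subset unfolding Cfs_def by blast
  qed
  have "k \<in> D"
    using rough_diff_op_shift[OF lin rough, of k0 "- c"] \<open>k0 \<in> Cfs\<close> \<open>Cfs \<subseteq> D\<close>
    unfolding k0_def by auto
  have "\<forall>w\<in>dball d z R. f w = k w"
  proof
    fix w
    assume "w \<in> dball d z R"
    then have "\<bar>f z - f w\<bar> \<le> R"
      using \<open>f \<in> Lip1 d\<close> unfolding Lip1_def dball_def by (blast intro: order_trans)
    then show "f w = k w"
      unfolding k_def by (simp add: abs_le_iff)
  qed
  then have "L f z = L k z"
    using semi_local_agree[OF lin spec[OF local]] \<open>k \<in> D\<close> f \<open>Cfs \<subseteq> D\<close> clamp_Lip1[OF f(2)]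
    unfolding k_def by blast
  also have "\<dots> = L k0 z"
    using rough_diff_op_shift(2)[OF lin rough \<open>k \<in> D\<close>] unfolding k0_def by simp
  finally have "\<bar>L f z\<bar> \<le> B * (SUP v. \<bar>k0 v\<bar>)"
    using bounded \<open>k0 \<in> Cfs\<close> by simp
  also have "\<dots> \<le> B * (2 * R)"
  proof -
    have "\<bar>k0 v\<bar> \<le> 2 * R" for v
      using \<open>R \<ge> 0\<close> unfolding k0_def k_def c_def by (auto simp: abs_le_iff max_def min_def)
    then have "(SUP v. \<bar>k0 v\<bar>) \<le> 2 * R"
      by (rule cSUP_least[OF UNIV_not_empty])
    then show ?thesis
      using \<open>B \<ge> 0\<close> by (rule mult_left_mono)
  qed
  finally show ?thesis
    by simp
qed

lemma L_bounded_on_Cfs_Lip1: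
  assumes "linear_op_on D L" "Cfs \<subseteq> D" "sup_bounded L" "semi_local d D L" "rough_diff_op D L"
  obtains C where "\<forall>f\<in>Cfs \<inter> Lip1 d. \<forall>z. \<bar>L f z\<bar> \<le> C"
proof -
  obtain B where B: "B > 0" "\<forall>f\<in>Cfs. \<forall>x. \<bar>L f x\<bar> \<le> B * (SUP y. \<bar>f y\<bar>)"
    using assms(3) unfolding sup_bounded_def by blast
  obtain R where R: "R > 0" "\<forall>x. \<forall>f\<in>D \<inter> Lip1 d. (\<forall>y\<in>dball d x R. f y = 0) \<longrightarrow> L f x = 0"
    using assms(4) unfolding semi_local_def by blast
  have "\<bar>L f z\<bar> \<le> 2 * B * R" if "f \<in> Cfs \<inter> Lip1 d" for f z
    using Lip1_Cfs_uniform_bound[OF assms(1,2) B(2) _ R(2) _ assms(5)] B(1) R(1) that by simp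
  then show ?thesis
    using that by blast
qed

lemma ORic_lower_bound:
  assumes "d y x > 0" and bound: "\<forall>f\<in>Cfs \<inter> Lip1 d. \<forall>z. \<bar>L f z\<bar> \<le> C"
  shows "ereal (- 2 * C / d y x) \<le> ORic d L x y"
  unfolding ORic_def
proof (rule Inf_greatest, clarify)
  fix f
  assume "f \<in> Cfs" "f \<in> Lip1 d"
  then have "\<bar>L f x\<bar> \<le> C" "\<bar>L f y\<bar> \<le> C"
    using bound by blast+
  then have "- 2 * C \<le> L f x - L f y"
    by linarith
  then have "- 2 * C / d y x \<le> (L f x - L f y) / d y x"
    using \<open>d y x > 0\<close> by (intro divide_right_mono) auto
  then show "ereal (- 2 * C / d y x) \<le> ereal (grad d y x (L f))"
    unfolding grad_def by simp
qed

lemma distance_bump_admissible: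
  assumes "is_distance d" "locally_d_finite d" "x \<noteq> y"
  defines "f \<equiv> \<lambda>v. max 0 (d x y - d y v)"
  shows "f \<in> Cfs \<inter> Lip1 d" "grad d x y f = 1"
proof -
  have dist: "d u v = d v u" "d u w \<le> d u v + d v w" "d u u = 0" "0 \<le> d u v" for u v w
    using assms(1) unfolding is_distance_def by blast+
  have "{v. f v \<noteq> 0} \<subseteq> dball d y (d x y)"
    unfolding f_def dball_def by auto
  then have "f \<in> Cfs"
    using assms(2) finite_subset unfolding Cfs_def locally_d_finite_def by blast
  moreover have "\<bar>f u - f v\<bar> \<le> d u v" for u v
  proof -
    have "\<bar>f u - f v\<bar> \<le> \<bar>d y u - d y v\<bar>"
      unfolding f_def by (simp add: abs_if max_def)
    then show ?thesis
      using dist(1)[of u v] dist(2)[of y u v] dist(2)[of y v u] by linarith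
  qed
  ultimately show "f \<in> Cfs \<inter> Lip1 d"
    by (simp add: Lip1_def)
  have "d x y \<noteq> 0"
    using assms(1,3) unfolding is_distance_def by blast
  then show "grad d x y f = 1"
    unfolding grad_def f_def using dist(1)[of x y] dist(3)[of y] dist(4)[of y x] by simp
qed

lemma ORic_less_infinity:
  assumes "is_distance d" "locally_d_finite d" "x \<noteq> y"
  shows "ORic d L x y \<noteq> \<infinity>"
proof -
  let ?f = "\<lambda>v. max 0 (d x y - d y v)"
  have "ORic d L x y \<le> ereal (grad d y x (L ?f))"
    unfolding ORic_def using distance_bump_admissible[OF assms] by (blast intro: Inf_lower)
  then show ?thesis
    by (cases "ORic d L x y") auto
qed

theorem mainTheorem15:
  fixes E :: "'v \<Rightarrow> 'v \<Rightarrow> bool" and d :: "'v \<Rightarrow> 'v \<Rightarrow> real"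
    and D :: "('v \<Rightarrow> real) set" and L :: "('v \<Rightarrow> real) \<Rightarrow> ('v \<Rightarrow> real)"
  assumes "locally_finite_graph E"
    and "is_distance d" and "d_complete d"
    and "locally_d_finite d"
    and "linear_op_on D L" and "Cfs \<subseteq> D"
    and "sup_bounded L"
    and "semi_local d D L"
    and "rough_diff_op D L"
  shows "\<forall>x y. x \<noteq> y \<longrightarrow> ORic d L x y \<noteq> \<infinity> \<and> ORic d L x y \<noteq> -\<infinity>"
proof (intro allI impI)
  fix x y :: 'v
  assume "x \<noteq> y"
  obtain C where bound: "\<forall>f\<in>Cfs \<inter> Lip1 d. \<forall>z. \<bar>L f z\<bar> \<le> C"
    using L_bounded_on_Cfs_Lip1[OF assms(5-9)] .
  have "d y x > 0"
    using \<open>is_distance d\<close> \<open>x \<noteq> y\<close> unfolding is_distance_def by (metis order_le_less)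
  then have "ereal (- 2 * C / d y x) \<le> ORic d L x y"
    using bound by (rule ORic_lower_bound)
  then show "ORic d L x y \<noteq> \<infinity> \<and> ORic d L x y \<noteq> -\<infinity>"
    using ORic_less_infinity[OF assms(2,4) \<open>x \<noteq> y\<close>] by auto
qed

end
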